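(* Let $A$ be a Lagrange tensor along $c$ with base point $t_0$ and $W\subset E_{t_0}$ a $p$-dimensional subspace. At every regular point $t$, with $g=g_W$, $$p\,\frac{g''}{g}=\frac1p(\operatorname{tr}S_1)^2-\operatorname{tr}(S_1^2)-3\operatorname{tr}(S_2^TS_2)-\sum_{i=1}^p\langle R_tw_i,w_i\rangle,$$ where $W_t=A_t^{-*}W\subset E_t$, $w_1,\dots,w_p$ is an orthonormal basis of $W_t$, and $S_1:W_t\to W_t$, $S_2:W_t\to W_t^\perp$ are defined by $S_tw=S_1w+S_2w$ for $w\in W_t$ (orthogonal projections of $S_tw$ to $W_t$ and $W_t^\perp$).
   Context: Setting: $(M^{n+1},g)$ is a Riemannian manifold and $c:I\to M$ a unit-speed geodesic. $E_t=\dot c(t)^\perp\subset T_{c(t)}M$, $R_t(x)=R(x,\dot c)\dot c$ on $E_t$, and $'$ is $\nabla_{\dot c}$. A Lagrange tensor with base point $t_0\in I$ is a smooth family of linear maps $A_t:E_{t_0}\to E_t$ with $A_t''+R_tA_t=0$, $\ker A_{t_0}\cap\ker A'_{t_0}=0$ and $\langle A_t'v,A_tw\rangle=\langle A_tv,A_t'w\rangle$ for all $t$, $v,w\in E_{t_0}$. $t$ is regular if $A_t$ is invertible; there $S_t=A_t'A_t^{-1}$ (self-adjoint). $A_t^{-*}=(A_t^* )^{-1}$ where $A_t^*$ is the adjoint. For a $p$-dimensional $W\subset E_{t_0}$ with orthonormal basis $e_1,\dots,e_p$, $(M_t)_{ij}=\langle A_t^{-*}e_i,A_t^{-*}e_j\rangle$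 and $g_W(t)=(\det M_t)^{-1/(2p)}$ at regular $t$. *)

theory Defs
  imports "HOL-Analysis.Analysis"
begin

text \<open>Parallel-frame model: along the unit-speed geodesic c, parallel transport
identifies every normal space E_t with one fixed Euclidean space real^'n
(n = dim M - 1), the covariant derivative along c becomes the ordinary
derivative, and R_t becomes a continuous family of symmetric matrices.\<close>

definition inv_adj :: "real^'n^'n \<Rightarrow> real^'n^'n" where
  "inv_adj A = matrix_inv (transpose A)"

definition gram_M :: "(real \<Rightarrow> real^'n^'n) \<Rightarrow> ('p::finite \<Rightarrow> real^'n) \<Rightarrow> real \<Rightarrow> real^'p^'p" where
  "gram_M A e t = (\<chi> i j. (inv_adj (A t) *v e i) \<bullet> (inv_adj (A t) *v e j))"

definition g_W :: "(real \<Rightarrow> real^'n^'n) \<Rightarrow> ('p::finite \<Rightarrow> real^'n) \<Rightarrow> real \<Rightarrow> real" where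
  "g_W A e t = det (gram_M A e t) powr (- 1 / (2 * real CARD('p)))"

definition orthonormal_fam :: "('p::finite \<Rightarrow> real^'n) \<Rightarrow> bool" where
  "orthonormal_fam w \<longleftrightarrow> (\<forall>i j. w i \<bullet> w j = (if i = j then 1 else 0))"

definition S1_op :: "real^'n^'n \<Rightarrow> ('p::finite \<Rightarrow> real^'n) \<Rightarrow> real^'n \<Rightarrow> real^'n" where
  "S1_op S w x = (\<Sum>i\<in>UNIV. ((S *v x) \<bullet> w i) *\<^sub>R w i)"

definition S2_op :: "real^'n^'n \<Rightarrow> ('p::finite \<Rightarrow> real^'n) \<Rightarrow> real^'n \<Rightarrow> real^'n" where
  "S2_op S w x = S *v x - S1_op S w x"

definition tr_S1 :: "real^'n^'n \<Rightarrow> ('p::finite \<Rightarrow> real^'n) \<Rightarrow> real" where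
  "tr_S1 S w = (\<Sum>i\<in>UNIV. S1_op S w (w i) \<bullet> w i)"

definition tr_S1_sq :: "real^'n^'n \<Rightarrow> ('p::finite \<Rightarrow> real^'n) \<Rightarrow> real" where
  "tr_S1_sq S w = (\<Sum>i\<in>UNIV. S1_op S w (S1_op S w (w i)) \<bullet> w i)"

definition tr_S2T_S2 :: "real^'n^'n \<Rightarrow> ('p::finite \<Rightarrow> real^'n) \<Rightarrow> real" where
  "tr_S2T_S2 S w = (\<Sum>i\<in>UNIV. S2_op S w (w i) \<bullet> S2_op S w (w i))"

end

theory Submission
  imports Defs
begin

(* In the parallel frame the vectors X_i(t) = A_t^{-*} e_i span W_t, M_t is their Gram
   matrix and S = A' A^{-1}.  The proof is a direct computation in four layers.
   (1) Calculus of matrix-valued functions, done entrywise: product rule, Jacobi's formula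
       (det F)' = det F * tr (F' F^{-1}) and (F^{-1})' = - F^{-1} F' F^{-1}.
   (2) Gram matrices: if w is an orthonormal basis of span X and C the coordinate matrix
       of X in w, then M^{-1} B_X = C^{-1} B_w C for the Gram matrix B of any bilinear
       form.  Hence traces of M^{-1} B_X and (M^{-1} B_X)^2 may be computed in the basis w.
   (3) Geometry: S is symmetric (Lagrange condition), X' = - S X, S' = - R - S^2 (Jacobi
       equation), so M' = - 2 N with N = (<S X_i, X_j>) and N' = (<(- R - 3 S^2) X_i, X_j>).
   (4) With H = tr (M^{-1} N) / p one gets g' = g H, hence g'' = g (H^2 + H'); by (2)
       p H = tr S_1 and p H' = 2 tr (S_1^2) - sum <R w_i, w_i> - 3 sum |S w_i|^2, and
       sum |S w_i|^2 = tr (S_1^2) + tr (S_2^T S_2) gives the stated formula. *)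


section \<open>Entrywise derivatives of vector- and matrix-valued functions\<close>

definition vec_deriv :: "(real \<Rightarrow> real^'n) \<Rightarrow> real^'n \<Rightarrow> real \<Rightarrow> bool" where
  "vec_deriv f D s \<longleftrightarrow> (\<forall>a. ((\<lambda>u. f u $ a) has_real_derivative D $ a) (at s))"

definition mat_deriv :: "(real \<Rightarrow> real^'n^'m) \<Rightarrow> real^'n^'m \<Rightarrow> real \<Rightarrow> bool" where
  "mat_deriv F D s \<longleftrightarrow> (\<forall>a b. ((\<lambda>u. F u $ a $ b) has_real_derivative D $ a $ b) (at s))"

lemma mat_deriv_of_vector_derivative:
  fixes F :: "real \<Rightarrow> real^'n^'m"
  assumes "(F has_vector_derivative D) (at s)"
  shows "mat_deriv F D s"
  unfolding mat_deriv_def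
proof (intro allI)
  fix a b
  have "bounded_linear (\<lambda>M::real^'n^'m. M $ a $ b)"
    by (intro bounded_linear_compose[OF bounded_linear_vec_nth] bounded_linear_vec_nth)
  from bounded_linear.has_vector_derivative[OF this assms]
  show "((\<lambda>u. F u $ a $ b) has_real_derivative D $ a $ b) (at s)"
    by (simp add: has_real_derivative_iff_has_vector_derivative)
qed

lemma mat_deriv_const: "mat_deriv (\<lambda>u. C) 0 s"
  unfolding mat_deriv_def by simp

lemma mat_deriv_mult:
  assumes "mat_deriv F F' s" "mat_deriv G G' s"
  shows "mat_deriv (\<lambda>u. F u ** G u) (F' ** G s + F s ** G') s"
  using assms unfolding mat_deriv_def matrix_matrix_mult_def
  by (auto intro!: derivative_eq_intros simp: sum.distrib algebra_simps)

lemma mat_deriv_transpose: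
  assumes "mat_deriv F F' s"
  shows "mat_deriv (\<lambda>u. transpose (F u)) (transpose F') s"
  using assms unfolding mat_deriv_def transpose_def by auto

lemma vec_deriv_const: "vec_deriv (\<lambda>u. c) 0 s"
  unfolding vec_deriv_def by simp

lemma vec_deriv_matrix_vector:
  assumes "mat_deriv F F' s" "vec_deriv x x' s"
  shows "vec_deriv (\<lambda>u. F u *v x u) (F' *v x s + F s *v x') s"
  using assms unfolding mat_deriv_def vec_deriv_def matrix_vector_mult_def
  by (auto intro!: derivative_eq_intros simp: sum.distrib algebra_simps)

lemma inner_has_real_derivative:
  assumes "vec_deriv x x' s" "vec_deriv y y' s"
  shows "((\<lambda>u. x u \<bullet> y u) has_real_derivative (x' \<bullet> y s + x s \<bullet> y')) (at s)"
  using assms unfolding vec_deriv_def inner_vec_def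
  by (auto intro!: derivative_eq_intros simp: sum.distrib algebra_simps)

lemma trace_has_real_derivative:
  assumes "mat_deriv F F' s"
  shows "((\<lambda>u. trace (F u)) has_real_derivative trace F') (at s)"
  using assms unfolding mat_deriv_def trace_def by (auto intro!: derivative_eq_intros)

lemma mat_deriv_unique:
  assumes "mat_deriv F D s" "mat_deriv F D' s"
  shows "D = D'"
  using assms DERIV_unique unfolding mat_deriv_def by (metis vec_eq_iff)

lemma mat_deriv_cong_eventually:
  assumes "eventually (\<lambda>u. F u = G u) (nhds s)" "mat_deriv G D s"
  shows "mat_deriv F D s"
  unfolding mat_deriv_def
proof (intro allI)
  fix a b
  have "eventually (\<lambda>u. F u $ a $ b = G u $ a $ b) (nhds s)"
    using assms(1) by eventually_elim simp
  then show "((\<lambda>u. F u $ a $ b) has_real_derivative D $ a $ b) (at s)"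
    using assms(2) unfolding mat_deriv_def by (subst DERIV_cong_ev[OF refl _ refl]) auto
qed


text \<open>The library defines matrix_inv by choice; these are its two-sided inverse property and
uniqueness, and the rules for transposes of inverses.\<close>

lemma matrix_inv_right_left:
  fixes A :: "real^'n^'m"
  assumes "invertible A"
  shows "A ** matrix_inv A = mat 1" "matrix_inv A ** A = mat 1"
proof -
  have "\<exists>A'. A ** A' = mat 1 \<and> A' ** A = mat 1" using assms unfolding invertible_def by blast
  from someI_ex[OF this] show "A ** matrix_inv A = mat 1" "matrix_inv A ** A = mat 1"
    unfolding matrix_inv_def by auto
qed

lemma matrix_inv_unique:
  fixes F Y :: "real^'n^'n"
  assumes "invertible F" "F ** Y = mat 1"
  shows "matrix_inv F = Y"
proof -
  have "matrix_inv F = matrix_inv F ** (F ** Y)" using assms(2) by simp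
  also have "\<dots> = Y" by (simp add: matrix_mul_assoc matrix_inv_right_left(2)[OF assms(1)])
  finally show ?thesis .
qed

lemma transpose_matrix_inv_left:
  fixes A :: "real^'n^'n"
  assumes "invertible A"
  shows "transpose (matrix_inv A) ** transpose A = mat 1"
  by (metis matrix_inv_right_left(1)[OF assms] matrix_transpose_mul transpose_mat)

lemma inv_adj_eq_transpose:
  fixes A :: "real^'n^'n"
  assumes "invertible A"
  shows "inv_adj A = transpose (matrix_inv A)"
  unfolding inv_adj_def
  by (rule matrix_inv_unique[OF transpose_invertible[OF assms]])
     (metis matrix_inv_right_left(2)[OF assms] matrix_transpose_mul transpose_mat)

lemma matrix_mul_uminus_left: "(- A :: real^'n^'m) ** B = - (A ** (B :: real^'p^'n))"
  by (simp add: vec_eq_iff matrix_matrix_mult_def sum_negf)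

lemma matrix_mul_uminus_right: "(A :: real^'n^'m) ** (- B) = - (A ** (B :: real^'p^'n))"
  by (simp add: vec_eq_iff matrix_matrix_mult_def sum_negf)

lemma matrix_vector_mult_uminus_left: "(- M :: real^'n^'m) *v x = - (M *v x)"
  by (simp add: vec_eq_iff matrix_vector_mult_def sum_negf)

lemma matrix_mul_scaleR_left: "(c *\<^sub>R A :: real^'n^'m) ** B = c *\<^sub>R (A ** (B :: real^'p^'n))"
  by (simp add: vec_eq_iff matrix_matrix_mult_def sum_distrib_left mult.assoc)

lemma matrix_vector_mult_scaleR_left: "(c *\<^sub>R M :: real^'n^'m) *v x = c *\<^sub>R (M *v x)"
  by (simp add: vec_eq_iff matrix_vector_mult_def sum_distrib_left mult.assoc)

lemma matrix_mul_scaleR_right: "(A :: real^'n^'m) ** (c *\<^sub>R B) = c *\<^sub>R (A ** (B :: real^'p^'n))"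
  by (simp add: vec_eq_iff matrix_matrix_mult_def sum_distrib_left mult.left_commute)

lemma trace_uminus: "trace (- A :: real^'n^'n) = - trace A"
  by (simp add: trace_def sum_negf)

lemma trace_scaleR: "trace (c *\<^sub>R A :: real^'n^'n) = c * trace A"
  by (simp add: trace_def sum_distrib_left)

lemma symmetric_inner:
  fixes S :: "real^'n^'n"
  assumes "transpose S = S"
  shows "(S *v x) \<bullet> y = x \<bullet> (S *v y)"
  by (metis assms dot_lmul_matrix vector_transpose_matrix)


section \<open>Jacobi's formula for the derivative of the determinant\<close>

lemma prod_replace_row:
  fixes F D :: "real^'n^'n"
  shows "(\<Prod>i\<in>UNIV. (\<chi> i. if i = k then D $ i else F $ i) $ i $ p i)
     = D $ k $ p k * (\<Prod>i\<in>UNIV - {k}. F $ i $ p i)"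
  by (subst prod.remove[of UNIV k]) (auto intro!: prod.cong)

lemma det_has_derivative_rows:
  fixes F :: "real \<Rightarrow> real^'n^'n"
  assumes "mat_deriv F F' s"
  shows "((\<lambda>u. det (F u)) has_real_derivative
     (\<Sum>k\<in>UNIV. det (\<chi> i. if i = k then F' $ i else F s $ i))) (at s)"
proof -
  have row_prod: "((\<lambda>u. \<Prod>i\<in>UNIV. F u $ i $ p i) has_real_derivative
           (\<Sum>k\<in>UNIV. F' $ k $ p k * (\<Prod>i\<in>UNIV - {k}. F s $ i $ p i))) (at s)" for p
    using has_field_derivative_prod[of UNIV "\<lambda>i u. F u $ i $ p i" "\<lambda>i. F' $ i $ p i" s] assms
    unfolding mat_deriv_def by auto
  have "((\<lambda>u. det (F u)) has_real_derivative
     (\<Sum>p\<in>{p. p permutes (UNIV::'n set)}. of_int (sign p) *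
        (\<Sum>k\<in>UNIV. F' $ k $ p k * (\<Prod>i\<in>UNIV - {k}. F s $ i $ p i)))) (at s)"
    unfolding det_def by (intro DERIV_sum DERIV_cmult row_prod)
  also have "(\<Sum>p\<in>{p. p permutes (UNIV::'n set)}. of_int (sign p) *
        (\<Sum>k\<in>UNIV. F' $ k $ p k * (\<Prod>i\<in>UNIV - {k}. F s $ i $ p i)))
      = (\<Sum>k\<in>UNIV. det (\<chi> i. if i = k then F' $ i else F s $ i))"
    unfolding det_def prod_replace_row sum_distrib_left by (rule sum.swap)
  finally show ?thesis .
qed

text \<open>Replacing row k of an invertible F by row k of D multiplies det F by the diagonal
entry (D F^-1)_kk; this is Cramer's rule applied to the rows of D = (D F^-1) F.\<close>

lemma det_replace_row:
  fixes F D :: "real^'n^'n"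
  assumes "invertible F"
  shows "det (\<chi> i. if i = k then D $ i else F $ i) = (D ** matrix_inv F) $ k $ k * det F"
proof -
  let ?N = "D ** matrix_inv F"
  have D_eq: "D = ?N ** F"
    using matrix_inv_right_left(2)[OF assms] by (metis matrix_mul_assoc matrix_mul_rid)
  have row_k: "D $ k = (\<Sum>j\<in>UNIV. (row k ?N) $ j *s row j F)"
    by (subst D_eq) (simp add: vec_eq_iff matrix_matrix_mult_def row_def sum_component mult.commute)
  have "(\<chi> i. if i = k then D $ i else F $ i) =
        (\<chi> i. if i = k then (\<Sum>j\<in>UNIV. (row k ?N) $ j *s row j F) else row i F)"
    using row_k by (simp add: vec_eq_iff row_def)
  then show ?thesis
    using cramer_lemma_transpose[of k "row k ?N" F] by (simp add: row_def)
qed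

lemma det_has_real_derivative:
  fixes F :: "real \<Rightarrow> real^'n^'n"
  assumes "mat_deriv F F' s" "invertible (F s)"
  shows "((\<lambda>u. det (F u)) has_real_derivative det (F s) * trace (F' ** matrix_inv (F s))) (at s)"
  using det_has_derivative_rows[OF assms(1)] det_replace_row[OF assms(2)]
  by (simp add: trace_def sum_distrib_left mult.commute)

lemma eventually_invertible:
  fixes F :: "real \<Rightarrow> real^'n^'n"
  assumes "mat_deriv F F' s" "invertible (F s)"
  shows "eventually (\<lambda>u. invertible (F u)) (nhds s)"
proof -
  have "isCont (\<lambda>u. det (F u)) s"
    using det_has_derivative_rows[OF assms(1)] by (rule DERIV_isCont)
  then have "eventually (\<lambda>u. det (F u) \<noteq> 0) (at s)"
    using assms(2) by (simp add: isCont_def invertible_det_nz tendsto_imp_eventually_ne)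
  then show ?thesis
    using assms(2) by (simp add: eventually_nhds_conv_at invertible_det_nz)
qed


lemma matrix_inv_entry:
  fixes F :: "real^'n^'n"
  assumes "det F \<noteq> 0"
  shows "matrix_inv F $ i $ j
     = det (\<chi> a b. if b = i then (axis j 1 :: real^'n) $ a else F $ a $ b) / det F"
proof -
  let ?x = "matrix_inv F *v axis j 1"
  have "invertible F" using assms by (simp add: invertible_det_nz)
  then have "F *v ?x = axis j 1"
    by (simp add: matrix_vector_mul_assoc matrix_inv_right_left(1))
  then have "?x $ i = det (\<chi> a b. if b = i then (axis j 1 :: real^'n) $ a else F $ a $ b) / det F"
    using cramer[OF assms] by auto
  moreover have "?x $ i = matrix_inv F $ i $ j"
    by (simp add: matrix_vector_mult_def axis_def if_distrib cong: if_cong)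
  ultimately show ?thesis by simp
qed

text \<open>By Cramer's rule the entries of F^-1 are quotients of polynomials in the entries of F,
so the inverse of a differentiable invertible matrix is differentiable.\<close>

lemma matrix_inv_differentiable:
  fixes F :: "real \<Rightarrow> real^'n^'n"
  assumes F: "mat_deriv F F' s" and inv: "invertible (F s)"
  shows "\<exists>D. mat_deriv (\<lambda>u. matrix_inv (F u)) D s"
proof -
  have "\<exists>d. ((\<lambda>u. matrix_inv (F u) $ i $ j) has_real_derivative d) (at s)" for i j
  proof -
    let ?C = "\<lambda>u. (\<chi> a b. if b = i then (axis j 1 :: real^'n) $ a else F u $ a $ b)"
    have "mat_deriv ?C (\<chi> a b. if b = i then 0 else F' $ a $ b) s"
      using F unfolding mat_deriv_def by (auto intro!: derivative_eq_intros)
    then obtain dn where dn: "((\<lambda>u. det (?C u)) has_real_derivative dn) (at s)"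
      using det_has_derivative_rows by blast
    obtain dd where dd: "((\<lambda>u. det (F u)) has_real_derivative dd) (at s)"
      using det_has_derivative_rows[OF F] by blast
    have det_nz: "det (F s) \<noteq> 0" using inv by (simp add: invertible_det_nz)
    have "eventually (\<lambda>u. matrix_inv (F u) $ i $ j = det (?C u) / det (F u)) (nhds s)"
      using eventually_invertible[OF F inv]
      by eventually_elim (simp add: matrix_inv_entry invertible_det_nz)
    then show ?thesis
      using DERIV_divide[OF dn dd det_nz] by (subst DERIV_cong_ev[OF refl _ refl]) auto
  qed
  then obtain d where "\<And>i j. ((\<lambda>u. matrix_inv (F u) $ i $ j) has_real_derivative d i j) (at s)"
    by metis
  then have "mat_deriv (\<lambda>u. matrix_inv (F u)) (\<chi> i j. d i j) s"
    unfolding mat_deriv_def by simp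
  then show ?thesis by blast
qed

text \<open>(F^-1)' = - F^-1 F' F^-1, obtained by differentiating F F^-1 = 1.\<close>

lemma mat_deriv_matrix_inv:
  fixes F :: "real \<Rightarrow> real^'n^'n"
  assumes F: "mat_deriv F F' s" and inv: "invertible (F s)"
  shows "mat_deriv (\<lambda>u. matrix_inv (F u)) (- (matrix_inv (F s) ** F' ** matrix_inv (F s))) s"
proof -
  obtain D where D: "mat_deriv (\<lambda>u. matrix_inv (F u)) D s"
    using matrix_inv_differentiable[OF F inv] by blast
  have "eventually (\<lambda>u. F u ** matrix_inv (F u) = mat 1) (nhds s)"
    using eventually_invertible[OF F inv] by eventually_elim (rule matrix_inv_right_left(1))
  then have "mat_deriv (\<lambda>u. F u ** matrix_inv (F u)) 0 s"
    using mat_deriv_const by (rule mat_deriv_cong_eventually)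
  then have "F' ** matrix_inv (F s) + F s ** D = 0"
    using mat_deriv_unique[OF mat_deriv_mult[OF F D]] by blast
  then have "F s ** D = - (F' ** matrix_inv (F s))"
    by (simp add: eq_neg_iff_add_eq_0 add.commute)
  then have "matrix_inv (F s) ** (F s ** D) = - (matrix_inv (F s) ** F' ** matrix_inv (F s))"
    by (simp add: matrix_mul_assoc matrix_mul_uminus_right)
  then have "D = - (matrix_inv (F s) ** F' ** matrix_inv (F s))"
    by (simp add: matrix_mul_assoc matrix_inv_right_left[OF inv])
  then show ?thesis using D by simp
qed


section \<open>Gram matrices and orthonormal families\<close>

definition gram_form ::
  "(real^'n \<Rightarrow> real^'n \<Rightarrow> real) \<Rightarrow> ('p::finite \<Rightarrow> real^'n) \<Rightarrow> real^'p^'p" where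
  "gram_form \<beta> X = (\<chi> i j. \<beta> (X i) (X j))"

definition matrix_form :: "real^'n^'n \<Rightarrow> real^'n \<Rightarrow> real^'n \<Rightarrow> real" where
  "matrix_form S x y = (S *v x) \<bullet> y"

lemma bilinear_matrix_form: "bilinear (matrix_form S)"
  unfolding bilinear_def linear_iff matrix_form_def
  by (simp add: matrix_vector_right_distrib inner_add_left inner_add_right matrix_vector_mult_scaleR)

lemma trace_gram_form: "trace (gram_form \<beta> w) = (\<Sum>i\<in>UNIV. \<beta> (w i) (w i))"
  by (simp add: trace_def gram_form_def)

definition lin_indep_fam :: "('p::finite \<Rightarrow> real^'n) \<Rightarrow> bool" where
  "lin_indep_fam X \<longleftrightarrow> (\<forall>c::real^'p. (\<Sum>i\<in>UNIV. c $ i *\<^sub>R X i) = 0 \<longrightarrow> c = 0)"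

lemma orthonormal_sum_inner:
  assumes "orthonormal_fam w"
  shows "(\<Sum>k\<in>UNIV. c k *\<^sub>R w k) \<bullet> w l = c l"
proof -
  have "(\<Sum>k\<in>UNIV. c k *\<^sub>R w k) \<bullet> w l = (\<Sum>k\<in>UNIV. c k * (w k \<bullet> w l))"
    by (simp add: inner_sum_left)
  also have "\<dots> = (\<Sum>k\<in>UNIV. if k = l then c k else 0)"
    using assms unfolding orthonormal_fam_def by (intro sum.cong) auto
  finally show ?thesis by simp
qed

lemma orthonormal_inj: "orthonormal_fam w \<Longrightarrow> inj w"
  unfolding orthonormal_fam_def inj_def by (metis one_neq_zero)

lemma gram_form_orthonormal: "orthonormal_fam w \<Longrightarrow> gram_form (\<bullet>) w = mat 1"
  by (simp add: orthonormal_fam_def gram_form_def mat_def vec_eq_iff)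

lemma orthonormal_expansion:
  assumes w: "orthonormal_fam w" and x: "x \<in> span (range w)"
  shows "x = (\<Sum>k\<in>UNIV. (x \<bullet> w k) *\<^sub>R w k)"
proof -
  obtain c where "x = (\<Sum>v\<in>range w. c v *\<^sub>R v)"
    using x span_finite[of "range w"] by auto
  then have x_eq: "x = (\<Sum>k\<in>UNIV. c (w k) *\<^sub>R w k)"
    using sum.reindex[OF orthonormal_inj[OF w], of "\<lambda>v. c v *\<^sub>R v"] by simp
  then have "x \<bullet> w l = c (w l)" for l
    using orthonormal_sum_inner[OF w] by simp
  with x_eq show ?thesis by simp
qed

lemma gram_form_change_of_basis:
  assumes bl: "bilinear \<beta>" and X: "\<And>j. X j = (\<Sum>k\<in>UNIV. C $ k $ j *\<^sub>R w k)"
  shows "gram_form \<beta> X = transpose C ** gram_form \<beta> w ** C"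
proof -
  have "\<beta> (X i) (X j) = (\<Sum>k\<in>UNIV. \<Sum>l\<in>UNIV. C $ k $ i * \<beta> (w k) (w l) * C $ l $ j)" for i j
  proof -
    have "\<beta> (X i) (X j) = (\<Sum>(k,l)\<in>UNIV \<times> UNIV. \<beta> (C $ k $ i *\<^sub>R w k) (C $ l $ j *\<^sub>R w l))"
      using bilinear_sum[OF bl, of "\<lambda>k. C$k$i *\<^sub>R w k" UNIV "\<lambda>l. C$l$j *\<^sub>R w l" UNIV]
      by (simp add: X[symmetric])
    then show ?thesis
      by (simp add: sum.cartesian_product bilinear_lmul[OF bl] bilinear_rmul[OF bl] ac_simps)
  qed
  moreover have "(transpose C ** gram_form \<beta> w ** C) $ i $ j
      = (\<Sum>k\<in>UNIV. \<Sum>l\<in>UNIV. C $ k $ i * \<beta> (w k) (w l) * C $ l $ j)" for i j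
    by (simp add: gram_form_def matrix_matrix_mult_def transpose_def sum_distrib_right)
       (rule sum.swap)
  ultimately show ?thesis
    by (simp add: gram_form_def vec_eq_iff)
qed

text \<open>The Gram matrix of a linearly independent family is invertible: if M c = 0 then
the combination sum c_j X_j is orthogonal to itself.\<close>

lemma gram_invertible:
  fixes X :: "'p::finite \<Rightarrow> real^'n"
  assumes "lin_indep_fam X"
  shows "invertible (gram_form (\<bullet>) X)"
  unfolding invertible_left_inverse matrix_left_invertible_ker
proof (intro allI impI)
  fix c :: "real^'p" assume c: "gram_form (\<bullet>) X *v c = 0"
  let ?v = "\<Sum>j\<in>UNIV. c $ j *\<^sub>R X j"
  have "X i \<bullet> ?v = (gram_form (\<bullet>) X *v c) $ i" for i
    by (simp add: gram_form_def matrix_vector_mult_def inner_sum_right mult.commute)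
  then have "?v \<bullet> ?v = 0" using c by (simp add: inner_sum_left)
  then show "c = 0" using assms unfolding lin_indep_fam_def by simp
qed

lemma gram_inverse_similar:
  fixes X w :: "'p::finite \<Rightarrow> real^'n"
  assumes w: "orthonormal_fam w" and sp: "span (range w) = span (range X)"
    and X: "lin_indep_fam X"
  defines "C \<equiv> (\<chi> k j. X j \<bullet> w k) :: real^'p^'p"
  shows "invertible C" "gram_form (\<bullet>) X = transpose C ** C"
    and "bilinear (\<beta> :: real^'n \<Rightarrow> real^'n \<Rightarrow> real) \<Longrightarrow>
      matrix_inv (gram_form (\<bullet>) X) ** gram_form \<beta> X = matrix_inv C ** gram_form \<beta> w ** C"
proof -
  have coords: "X j = (\<Sum>k\<in>UNIV. C $ k $ j *\<^sub>R w k)" for j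
    using orthonormal_expansion[OF w, of "X j"] sp by (simp add: C_def span_base)
  have bl_inner: "bilinear ((\<bullet>) :: real^'n \<Rightarrow> _)"
    by (simp add: bilinear_def linear_iff inner_add_left inner_add_right)
  show gram_eq: "gram_form (\<bullet>) X = transpose C ** C"
    using gram_form_change_of_basis[OF bl_inner coords] gram_form_orthonormal[OF w] by simp
  have "det (gram_form (\<bullet>) X) \<noteq> 0"
    using gram_invertible[OF X] by (simp add: invertible_det_nz)
  then show C_inv: "invertible C"
    by (simp add: gram_eq det_mul invertible_det_nz)
  let ?Ci = "matrix_inv C"
  have "transpose C ** C ** (?Ci ** transpose ?Ci) = transpose C ** (C ** ?Ci) ** transpose ?Ci"
    by (simp add: matrix_mul_assoc)
  also have "\<dots> = mat 1"
    by (metis C_inv matrix_inv_right_left(2) matrix_inv_right_left(1) matrix_mul_rid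
        matrix_transpose_mul transpose_mat)
  finally have G: "matrix_inv (gram_form (\<bullet>) X) = ?Ci ** transpose ?Ci"
    unfolding gram_eq by (rule matrix_inv_unique[OF invertible_mult[OF transpose_invertible[OF C_inv] C_inv]])
  show "matrix_inv (gram_form (\<bullet>) X) ** gram_form \<beta> X = ?Ci ** gram_form \<beta> w ** C"
    if bl: "bilinear \<beta>"
  proof -
    have "matrix_inv (gram_form (\<bullet>) X) ** gram_form \<beta> X
        = ?Ci ** (transpose ?Ci ** transpose C) ** gram_form \<beta> w ** C"
      by (simp add: G gram_form_change_of_basis[OF bl coords] matrix_mul_assoc)
    then show ?thesis by (simp add: transpose_matrix_inv_left[OF C_inv])
  qed
qed

text \<open>Consequently traces involving M^-1 B_X can be evaluated in any orthonormal basis of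
span X: they are intrinsic to the subspace.\<close>

lemma trace_gram_inverse:
  fixes X w :: "'p::finite \<Rightarrow> real^'n"
  assumes "orthonormal_fam w" "span (range w) = span (range X)" "lin_indep_fam X" "bilinear \<beta>"
  shows "trace (matrix_inv (gram_form (\<bullet>) X) ** gram_form \<beta> X) = trace (gram_form \<beta> w)"
proof -
  let ?C = "(\<chi> k j. X j \<bullet> w k) :: real^'p^'p"
  have C_inv: "invertible ?C" by (rule gram_inverse_similar(1)[OF assms(1-3)])
  have "trace (matrix_inv ?C ** gram_form \<beta> w ** ?C) = trace (?C ** (matrix_inv ?C ** gram_form \<beta> w))"
    by (rule trace_mul_sym)
  also have "\<dots> = trace (gram_form \<beta> w)"
    by (simp add: matrix_mul_assoc matrix_inv_right_left[OF C_inv])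
  finally show ?thesis
    using gram_inverse_similar(3)[OF assms(1-3,4)] by simp
qed

lemma trace_gram_inverse_square:
  fixes X w :: "'p::finite \<Rightarrow> real^'n"
  assumes "orthonormal_fam w" "span (range w) = span (range X)" "lin_indep_fam X" "bilinear \<beta>"
  defines "G \<equiv> matrix_inv (gram_form (\<bullet>) X)"
  shows "trace (G ** gram_form \<beta> X ** G ** gram_form \<beta> X)
       = trace (gram_form \<beta> w ** gram_form \<beta> w)"
proof -
  let ?C = "(\<chi> k j. X j \<bullet> w k) :: real^'p^'p" and ?B = "gram_form \<beta> w"
  have sim: "G ** gram_form \<beta> X = matrix_inv ?C ** ?B ** ?C"
    unfolding G_def using gram_inverse_similar[OF assms(1-3)] assms(4) by simp
  have C_inv: "invertible ?C" by (rule gram_inverse_similar(1)[OF assms(1-3)])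
  have "G ** gram_form \<beta> X ** G ** gram_form \<beta> X = (G ** gram_form \<beta> X) ** (G ** gram_form \<beta> X)"
    by (simp only: matrix_mul_assoc)
  also have "\<dots> = matrix_inv ?C ** ?B ** (?C ** matrix_inv ?C) ** ?B ** ?C"
    by (simp only: sim matrix_mul_assoc)
  also have "\<dots> = matrix_inv ?C ** ?B ** ?B ** ?C"
    by (simp add: matrix_inv_right_left(1)[OF C_inv])
  finally have "trace (G ** gram_form \<beta> X ** G ** gram_form \<beta> X)
      = trace (?C ** (matrix_inv ?C ** ?B ** ?B))"
    by (simp only: trace_mul_sym[of "matrix_inv ?C ** ?B ** ?B"])
  then show ?thesis
    by (simp add: matrix_mul_assoc matrix_inv_right_left(1)[OF C_inv])
qed

lemma lin_indep_fam_independent: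
  fixes X :: "'p::finite \<Rightarrow> real^'n"
  assumes X: "lin_indep_fam X"
  shows "inj X" "independent (range X)"
proof -
  show inj: "inj X"
  proof (rule injI, rule ccontr)
    fix i j assume "X i = X j" "i \<noteq> j"
    have "(\<Sum>k\<in>UNIV. (axis i 1 - axis j 1 :: real^'p) $ k *\<^sub>R X k)
        = (\<Sum>k\<in>UNIV. (if k = i then X k else 0) - (if k = j then X k else 0))"
      by (intro sum.cong) (auto simp: axis_def)
    then have "(\<Sum>k\<in>UNIV. (axis i 1 - axis j 1 :: real^'p) $ k *\<^sub>R X k) = 0"
      using \<open>X i = X j\<close> by (simp add: sum_subtractf)
    then have "(axis i 1 - axis j 1 :: real^'p) = 0" using X unfolding lin_indep_fam_def by blast
    then have "(axis i 1 - axis j 1 :: real^'p) $ i = 0" by simp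
    then show False using \<open>i \<noteq> j\<close> by (simp add: axis_def)
  qed
  have "\<forall>c. (\<Sum>v\<in>range X. c v *\<^sub>R v) = 0 \<longrightarrow> (\<forall>v\<in>range X. c v = 0)"
  proof (intro allI impI ballI)
    fix c v assume s: "(\<Sum>v\<in>range X. c v *\<^sub>R v) = 0" and v: "v \<in> range X"
    have "(\<Sum>i\<in>UNIV. (\<chi> k. c (X k)) $ i *\<^sub>R X i) = 0"
      using s sum.reindex[OF inj, of "\<lambda>v. c v *\<^sub>R v"] by simp
    then have "(\<chi> k. c (X k)) = (0::real^'p)" using X unfolding lin_indep_fam_def by blast
    then show "c v = 0" using v by (auto simp: vec_eq_iff)
  qed
  then show "independent (range X)" by (simp add: independent_explicit)
qed

lemma orthonormal_basis_of_span:
  fixes X :: "'p::finite \<Rightarrow> real^'n"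
  assumes X: "lin_indep_fam X"
  shows "\<exists>w::'p \<Rightarrow> real^'n. orthonormal_fam w \<and> span (range w) = span (range X)"
proof -
  note inj = lin_indep_fam_independent(1)[OF X] and ind = lin_indep_fam_independent(2)[OF X]
  obtain B where B: "B \<subseteq> span (range X)" "pairwise orthogonal B" "\<And>x. x \<in> B \<Longrightarrow> norm x = 1"
      "independent B" "card B = dim (span (range X))" "span B = span (range X)"
    using orthonormal_basis_subspace[OF subspace_span] by blast
  have "card B = CARD('p)"
    using B(5) dim_eq_card_independent[OF ind] card_image[OF inj] by simp
  then obtain h where h: "bij_betw h (UNIV::'p set) B"
    using finite_same_card_bij[OF finite independent_imp_finite[OF B(4)]] by auto
  have "orthonormal_fam h"
    unfolding orthonormal_fam_def
  proof (intro allI)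
    fix i j
    have hB: "h i \<in> B" "h j \<in> B" using h by (auto simp: bij_betw_def)
    show "h i \<bullet> h j = (if i = j then 1 else 0)"
    proof (cases "i = j")
      case True
      then show ?thesis using B(3)[OF hB(1)] by (simp add: norm_eq_1)
    next
      case False
      then have "h i \<noteq> h j" using h by (auto simp: bij_betw_def inj_def)
      then show ?thesis using B(2) hB False unfolding pairwise_def orthogonal_def by auto
    qed
  qed
  moreover have "range h = B" using h by (simp add: bij_betw_def)
  ultimately show ?thesis using B(6) by blast
qed

lemma gram_det_pos:
  fixes X :: "'p::finite \<Rightarrow> real^'n"
  assumes "lin_indep_fam X"
  shows "det (gram_form (\<bullet>) X) > 0"
proof -
  obtain w :: "'p \<Rightarrow> real^'n" where "orthonormal_fam w" "span (range w) = span (range X)"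
    using orthonormal_basis_of_span[OF assms] by blast
  from gram_inverse_similar(1,2)[OF this assms]
  show ?thesis by (auto simp: det_mul invertible_det_nz zero_less_mult_iff linorder_neq_iff)
qed

lemma lin_indep_fam_image:
  fixes B :: "real^'n^'n" and e :: "'p::finite \<Rightarrow> real^'n"
  assumes B: "invertible B" and e: "orthonormal_fam e"
  shows "lin_indep_fam (\<lambda>i. B *v e i)"
  unfolding lin_indep_fam_def
proof (intro allI impI)
  fix c :: "real^'p" assume "(\<Sum>i\<in>UNIV. c $ i *\<^sub>R (B *v e i)) = 0"
  then have "B *v (\<Sum>i\<in>UNIV. c $ i *\<^sub>R e i) = 0"
    by (simp add: linear_sum[OF matrix_vector_mul_linear] matrix_vector_mult_scaleR)
  then have "matrix_inv B *v (B *v (\<Sum>i\<in>UNIV. c $ i *\<^sub>R e i)) = 0" by simp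
  then have v0: "(\<Sum>i\<in>UNIV. c $ i *\<^sub>R e i) = 0"
    by (simp add: matrix_vector_mul_assoc matrix_inv_right_left(2)[OF B])
  have "c $ l = 0" for l
    using orthonormal_sum_inner[OF e, of "\<lambda>i. c $ i" l] by (simp add: v0)
  then show "c = 0" by (simp add: vec_eq_iff)
qed


lemma S1_op_inner:
  assumes "orthonormal_fam w"
  shows "S1_op S w x \<bullet> w l = (S *v x) \<bullet> w l"
  unfolding S1_op_def using orthonormal_sum_inner[OF assms] by simp

lemma tr_S1_eq_trace:
  assumes "orthonormal_fam w"
  shows "tr_S1 S w = trace (gram_form (matrix_form S) w)"
  unfolding tr_S1_def trace_gram_form matrix_form_def using S1_op_inner[OF assms] by simp

lemma tr_S1_sq_sum:
  assumes w: "orthonormal_fam w"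
  shows "tr_S1_sq S w = (\<Sum>i\<in>UNIV. \<Sum>j\<in>UNIV. ((S *v w i) \<bullet> w j) * ((S *v w j) \<bullet> w i))"
proof -
  have "S1_op S w (S1_op S w (w i)) \<bullet> w i
      = (\<Sum>j\<in>UNIV. ((S *v w i) \<bullet> w j) * ((S *v w j) \<bullet> w i))" for i
  proof -
    have "S *v S1_op S w (w i) = (\<Sum>j\<in>UNIV. ((S *v w i) \<bullet> w j) *\<^sub>R (S *v w j))"
      unfolding S1_op_def by (simp add: linear_sum[OF matrix_vector_mul_linear] matrix_vector_mult_scaleR)
    then show ?thesis by (simp add: S1_op_inner[OF w] inner_sum_left)
  qed
  then show ?thesis by (simp add: tr_S1_sq_def)
qed

lemma tr_S1_sq_eq_trace:
  assumes "orthonormal_fam w"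
  shows "tr_S1_sq S w = trace (gram_form (matrix_form S) w ** gram_form (matrix_form S) w)"
  by (simp add: tr_S1_sq_sum[OF assms] trace_def matrix_matrix_mult_def gram_form_def matrix_form_def)

lemma sum_norm_shape_split:
  assumes w: "orthonormal_fam w" and S: "transpose S = S"
  shows "(\<Sum>i\<in>UNIV. (S *v w i) \<bullet> (S *v w i)) = tr_S1_sq S w + tr_S2T_S2 S w"
proof -
  have "S2_op S w (w i) \<bullet> S2_op S w (w i)
      = (S *v w i) \<bullet> (S *v w i) - (\<Sum>j\<in>UNIV. ((S *v w i) \<bullet> w j) * ((S *v w j) \<bullet> w i))" for i
  proof -
    let ?y = "S *v w i" and ?p = "S1_op S w (w i)"
    have sym: "(S *v w j) \<bullet> w i = ?y \<bullet> w j" for j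
      using symmetric_inner[OF S, of "w j" "w i"] by (simp add: inner_commute)
    have "?y \<bullet> ?p = (\<Sum>j\<in>UNIV. (?y \<bullet> w j) * (?y \<bullet> w j))"
      unfolding S1_op_def by (simp add: inner_sum_right)
    moreover have "?p \<bullet> ?p = (\<Sum>j\<in>UNIV. (?y \<bullet> w j) * (?y \<bullet> w j))"
      by (subst (2) S1_op_def) (simp add: inner_sum_right S1_op_inner[OF w])
    moreover have "S2_op S w (w i) \<bullet> S2_op S w (w i) = ?y \<bullet> ?y - 2 * (?y \<bullet> ?p) + ?p \<bullet> ?p"
      unfolding S2_op_def by (simp add: inner_diff_left inner_diff_right inner_commute)
    ultimately show ?thesis by (simp add: sym)
  qed
  then show ?thesis
    by (simp add: tr_S2T_S2_def tr_S1_sq_sum[OF w] sum_subtractf)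
qed


section \<open>A Lagrange tensor at a regular point\<close>

definition regular_point ::
  "(real \<Rightarrow> real^'n^'n) \<Rightarrow> (real \<Rightarrow> real^'n^'n) \<Rightarrow> (real \<Rightarrow> real^'n^'n) \<Rightarrow> (real \<Rightarrow> real^'n^'n)
     \<Rightarrow> real \<Rightarrow> bool" where
  "regular_point A A' A'' R u \<longleftrightarrow>
     (A has_vector_derivative A' u) (at u) \<and> (A' has_vector_derivative A'' u) (at u) \<and>
     A'' u + R u ** A u = 0 \<and> transpose (A' u) ** A u = transpose (A u) ** A' u \<and> invertible (A u)"

definition shape_op :: "(real \<Rightarrow> real^'n^'n) \<Rightarrow> (real \<Rightarrow> real^'n^'n) \<Rightarrow> real \<Rightarrow> real^'n^'n" where
  "shape_op A A' u = A' u ** matrix_inv (A u)"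

definition frame :: "(real \<Rightarrow> real^'n^'n) \<Rightarrow> ('p::finite \<Rightarrow> real^'n) \<Rightarrow> real \<Rightarrow> 'p \<Rightarrow> real^'n" where
  "frame A e u i = inv_adj (A u) *v e i"

definition shape_gram ::
  "(real \<Rightarrow> real^'n^'n) \<Rightarrow> (real \<Rightarrow> real^'n^'n) \<Rightarrow> ('p::finite \<Rightarrow> real^'n) \<Rightarrow> real \<Rightarrow> real^'p^'p" where
  "shape_gram A A' e u = gram_form (matrix_form (shape_op A A' u)) (frame A e u)"

lemma gram_M_eq_gram_form: "gram_M A e u = gram_form (\<bullet>) (frame A e u)"
  by (simp add: gram_M_def gram_form_def frame_def)

text \<open>The Lagrange condition A'^T A = A^T A' says exactly that S is symmetric.\<close>

lemma shape_op_symmetric: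
  assumes "regular_point A A' A'' R u"
  shows "transpose (shape_op A A' u) = shape_op A A' u"
proof -
  let ?Ai = "matrix_inv (A u)"
  have inv: "invertible (A u)" and lag: "transpose (A' u) ** A u = transpose (A u) ** A' u"
    using assms unfolding regular_point_def by auto
  have "transpose ?Ai ** transpose (A' u) = transpose ?Ai ** (transpose (A' u) ** A u) ** ?Ai"
    by (simp add: matrix_mul_assoc[symmetric] matrix_inv_right_left(1)[OF inv])
  also have "\<dots> = (transpose ?Ai ** transpose (A u)) ** A' u ** ?Ai"
    by (simp add: lag matrix_mul_assoc)
  also have "\<dots> = A' u ** ?Ai"
    by (simp add: transpose_matrix_inv_left[OF inv])
  finally show ?thesis
    by (simp add: shape_op_def matrix_transpose_mul)
qed

lemma frame_lin_indep:
  fixes e :: "'p::finite \<Rightarrow> real^'n"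
  assumes "invertible (A u)" "orthonormal_fam e"
  shows "lin_indep_fam (frame A e u)"
proof -
  have "invertible (inv_adj (A u))"
    unfolding inv_adj_def invertible_def
    using matrix_inv_right_left[OF transpose_invertible[OF assms(1)]] by blast
  from lin_indep_fam_image[OF this assms(2)] show ?thesis
    by (simp add: frame_def[abs_def])
qed

lemma gram_M_det_pos:
  assumes "invertible (A u)" "orthonormal_fam e"
  shows "det (gram_M A e u) > 0"
  unfolding gram_M_eq_gram_form by (rule gram_det_pos[OF frame_lin_indep[where A=A and u=u and e=e, OF assms]])

lemma g_W_pos:
  assumes "invertible (A u)" "orthonormal_fam e"
  shows "g_W A e u > 0"
  using gram_M_det_pos[where A=A and u=u and e=e, OF assms] by (simp add: g_W_def)

lemma frame_deriv:
  assumes reg: "regular_point A A' A'' R u"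
  shows "vec_deriv (\<lambda>v. frame A e v i) (- (shape_op A A' u *v frame A e u i)) u"
proof -
  let ?S = "shape_op A A' u" and ?B = "inv_adj (A u)"
  have dA: "(A has_vector_derivative A' u) (at u)" and inv: "invertible (A u)"
    using reg unfolding regular_point_def by auto
  have "mat_deriv (\<lambda>v. transpose (A v)) (transpose (A' u)) u"
    by (rule mat_deriv_transpose[OF mat_deriv_of_vector_derivative[OF dA]])
  from mat_deriv_matrix_inv[OF this transpose_invertible[OF inv]]
  have "mat_deriv (\<lambda>v. inv_adj (A v)) (- (?B ** transpose (A' u) ** ?B)) u"
    by (simp add: inv_adj_def)
  moreover have "?B ** transpose (A' u) = ?S"
    using shape_op_symmetric[OF reg]
    by (simp add: inv_adj_eq_transpose[OF inv] shape_op_def matrix_transpose_mul)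
  ultimately have "mat_deriv (\<lambda>v. inv_adj (A v)) (- (?S ** ?B)) u" by simp
  from vec_deriv_matrix_vector[OF this vec_deriv_const]
  show ?thesis
    by (simp add: frame_def[abs_def] matrix_vector_mult_uminus_left matrix_vector_mul_assoc)
qed

lemma gram_M_deriv:
  assumes reg: "regular_point A A' A'' R u"
  shows "mat_deriv (gram_M A e) ((- 2) *\<^sub>R shape_gram A A' e u) u"
  unfolding mat_deriv_def
proof (intro allI)
  fix i j
  let ?S = "shape_op A A' u" and ?X = "frame A e u"
  have "((\<lambda>v. frame A e v i \<bullet> frame A e v j) has_real_derivative
      (- (?S *v ?X i)) \<bullet> ?X j + ?X i \<bullet> (- (?S *v ?X j))) (at u)"
    by (rule inner_has_real_derivative[OF frame_deriv[OF reg] frame_deriv[OF reg]])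
  moreover have "(- (?S *v ?X i)) \<bullet> ?X j + ?X i \<bullet> (- (?S *v ?X j)) = - 2 * ((?S *v ?X i) \<bullet> ?X j)"
    using symmetric_inner[OF shape_op_symmetric[OF reg], of "?X i" "?X j"] by simp
  ultimately show "((\<lambda>v. gram_M A e v $ i $ j) has_real_derivative
      ((- 2) *\<^sub>R shape_gram A A' e u) $ i $ j) (at u)"
    by (simp add: gram_M_eq_gram_form shape_gram_def gram_form_def matrix_form_def)
qed

text \<open>The Riccati equation S' = - R - S^2, from the Jacobi equation A'' = - R A.\<close>

lemma shape_op_deriv:
  assumes reg: "regular_point A A' A'' R u"
  shows "mat_deriv (shape_op A A') (- R u - shape_op A A' u ** shape_op A A' u) u"
proof -
  let ?Ai = "matrix_inv (A u)"
  have dA: "(A has_vector_derivative A' u) (at u)" and dA': "(A' has_vector_derivative A'' u) (at u)"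
    and jac: "A'' u = - (R u ** A u)" and inv: "invertible (A u)"
    using reg unfolding regular_point_def by (auto simp: eq_neg_iff_add_eq_0)
  have "mat_deriv (shape_op A A') (A'' u ** ?Ai + A' u ** - (?Ai ** A' u ** ?Ai)) u"
    unfolding shape_op_def[abs_def]
    by (rule mat_deriv_mult[OF mat_deriv_of_vector_derivative[OF dA']
          mat_deriv_matrix_inv[OF mat_deriv_of_vector_derivative[OF dA] inv]])
  moreover have "A'' u ** ?Ai = - R u"
    by (simp add: jac matrix_mul_uminus_left matrix_mul_assoc[symmetric] matrix_inv_right_left(1)[OF inv])
  ultimately show ?thesis
    by (simp add: shape_op_def matrix_mul_uminus_right matrix_mul_assoc)
qed

text \<open>N' = (<(- R - 3 S^2) X_i, X_j>): one S^2 from the Riccati equation and one from each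
of the two transported vectors.\<close>

lemma shape_gram_deriv:
  assumes reg: "regular_point A A' A'' R u"
  defines "S \<equiv> shape_op A A' u"
  shows "mat_deriv (shape_gram A A' e)
    (gram_form (matrix_form (- R u - 3 *\<^sub>R (S ** S))) (frame A e u)) u"
  unfolding mat_deriv_def
proof (intro allI)
  fix i j
  let ?X = "frame A e u"
  have Ssym: "transpose S = S" unfolding S_def by (rule shape_op_symmetric[OF reg])
  have "vec_deriv (\<lambda>v. shape_op A A' v *v frame A e v i)
      ((- R u - S ** S) *v ?X i + S *v (- (S *v ?X i))) u"
    unfolding S_def by (rule vec_deriv_matrix_vector[OF shape_op_deriv[OF reg] frame_deriv[OF reg]])
  from inner_has_real_derivative[OF this frame_deriv[OF reg]]
  have "((\<lambda>v. shape_gram A A' e v $ i $ j) has_real_derivative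
      ((- R u - S ** S) *v ?X i + S *v (- (S *v ?X i))) \<bullet> ?X j + (S *v ?X i) \<bullet> (- (S *v ?X j))) (at u)"
    by (simp add: shape_gram_def gram_form_def matrix_form_def S_def)
  moreover have "((- R u - S ** S) *v ?X i + S *v (- (S *v ?X i))) \<bullet> ?X j + (S *v ?X i) \<bullet> (- (S *v ?X j))
      = gram_form (matrix_form (- R u - 3 *\<^sub>R (S ** S))) ?X $ i $ j"
  proof -
    have "(S *v ?X i) \<bullet> (S *v ?X j) = (S *v (S *v ?X i)) \<bullet> ?X j"
      by (simp add: symmetric_inner[OF Ssym])
    then show ?thesis
      unfolding gram_form_def matrix_form_def vec_lambda_beta
      by (simp only: matrix_vector_mult_diff_rdistrib matrix_vector_mult_uminus_left
          matrix_vector_mult_scaleR_left vec.neg matrix_vector_mul_assoc[symmetric]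
          inner_add_left inner_diff_left inner_minus_left inner_minus_right inner_scaleR_left)
  qed
  ultimately show "((\<lambda>v. shape_gram A A' e v $ i $ j) has_real_derivative
      gram_form (matrix_form (- R u - 3 *\<^sub>R (S ** S))) ?X $ i $ j) (at u)"
    by simp
qed


section \<open>The logarithmic derivative of g_W and its derivative\<close>

text \<open>H = tr (M^-1 N) / p, the mean of S on W_u; it is the logarithmic derivative of g_W.\<close>

definition mean_curv ::
  "(real \<Rightarrow> real^'n^'n) \<Rightarrow> (real \<Rightarrow> real^'n^'n) \<Rightarrow> ('p::finite \<Rightarrow> real^'n) \<Rightarrow> real \<Rightarrow> real" where
  "mean_curv A A' e u = trace (matrix_inv (gram_M A e u) ** shape_gram A A' e u) / real CARD('p)"

text \<open>g' = g H: by Jacobi's formula and M' = - 2 N, (det M)' = - 2 det M tr (M^-1 N).\<close>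

lemma g_W_has_derivative:
  fixes e :: "'p::finite \<Rightarrow> real^'n"
  assumes reg: "regular_point A A' A'' R u" and e: "orthonormal_fam e"
  shows "(g_W A e has_real_derivative g_W A e u * mean_curv A A' e u) (at u)"
proof -
  let ?d = "det (gram_M A e u)" and ?G = "matrix_inv (gram_M A e u)" and ?N = "shape_gram A A' e u"
  let ?c = "- 1 / (2 * real CARD('p))"
  have inv: "invertible (A u)" using reg unfolding regular_point_def by blast
  have d_pos: "?d > 0" by (rule gram_M_det_pos[where A=A and u=u, OF inv e])
  then have "invertible (gram_M A e u)" by (simp add: invertible_det_nz)
  from det_has_real_derivative[OF gram_M_deriv[OF reg] this]
  have "((\<lambda>v. det (gram_M A e v)) has_real_derivative ?d * (- 2 * trace (?G ** ?N))) (at u)"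
    by (simp add: matrix_mul_uminus_left matrix_mul_scaleR_left trace_uminus trace_scaleR
        trace_mul_sym[of ?N])
  from DERIV_fun_powr[OF this d_pos, of ?c]
  have "(g_W A e has_real_derivative ?c * ?d powr (?c - 1) * (?d * (- 2 * trace (?G ** ?N)))) (at u)"
    by (simp add: g_W_def[abs_def])
  moreover have "?c * ?d powr (?c - 1) * (?d * (- 2 * trace (?G ** ?N)))
      = (?d powr (?c - 1) * ?d) * (trace (?G ** ?N) / real CARD('p))"
    by (simp add: field_simps)
  also have "\<dots> = g_W A e u * mean_curv A A' e u"
    using d_pos by (simp add: powr_diff g_W_def mean_curv_def)
  ultimately show ?thesis by simp
qed

text \<open>The derivative of H, from (M^-1)' = - M^-1 M' M^-1 = 2 M^-1 N M^-1 and N' = B_{-R-3S^2}.\<close>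

lemma mean_curv_has_derivative:
  fixes e :: "'p::finite \<Rightarrow> real^'n"
  assumes reg: "regular_point A A' A'' R u" and e: "orthonormal_fam e"
  defines "G \<equiv> matrix_inv (gram_M A e u)" and "N \<equiv> shape_gram A A' e u"
    and "N' \<equiv> gram_form (matrix_form (- R u - 3 *\<^sub>R (shape_op A A' u ** shape_op A A' u))) (frame A e u)"
  shows "(mean_curv A A' e has_real_derivative
      (2 * trace (G ** N ** G ** N) + trace (G ** N')) / real CARD('p)) (at u)"
proof -
  have inv: "invertible (A u)" using reg unfolding regular_point_def by blast
  have "invertible (gram_M A e u)"
    using gram_M_det_pos[where A=A and u=u, OF inv e] by (simp add: invertible_det_nz)
  from mat_deriv_matrix_inv[OF gram_M_deriv[OF reg] this]
  have "mat_deriv (\<lambda>v. matrix_inv (gram_M A e v)) (2 *\<^sub>R (G ** N ** G)) u"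
    by (simp add: G_def N_def matrix_mul_uminus_left matrix_mul_uminus_right
        matrix_mul_scaleR_left matrix_mul_scaleR_right)
  from mat_deriv_mult[OF this shape_gram_deriv[OF reg]]
  have "mat_deriv (\<lambda>v. matrix_inv (gram_M A e v) ** shape_gram A A' e v)
      (2 *\<^sub>R (G ** N ** G) ** N + G ** N') u"
    by (simp add: G_def N_def N'_def)
  from DERIV_cdivide[OF trace_has_real_derivative[OF this], of "real CARD('p)"]
  show ?thesis
    by (simp add: mean_curv_def[abs_def] trace_add matrix_mul_scaleR_left trace_scaleR)
qed

lemma mean_curv_in_basis:
  fixes e w :: "'p::finite \<Rightarrow> real^'n"
  assumes reg: "regular_point A A' A'' R u" and e: "orthonormal_fam e"
    and w: "orthonormal_fam w" and sp: "span (range w) = span (range (frame A e u))"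
  defines "S \<equiv> shape_op A A' u" and "G \<equiv> matrix_inv (gram_M A e u)" and "N \<equiv> shape_gram A A' e u"
  shows "trace (G ** N) = tr_S1 S w"
    and "2 * trace (G ** N ** G ** N) + trace (G ** gram_form (matrix_form (- R u - 3 *\<^sub>R (S ** S))) (frame A e u))
      = - tr_S1_sq S w - 3 * tr_S2T_S2 S w - (\<Sum>i\<in>UNIV. (R u *v w i) \<bullet> w i)"
proof -
  have inv: "invertible (A u)" using reg unfolding regular_point_def by blast
  note X = frame_lin_indep[where A=A and u=u and e=e, OF inv e]
  have G: "G = matrix_inv (gram_form (\<bullet>) (frame A e u))" by (simp add: G_def gram_M_eq_gram_form)
  have N: "N = gram_form (matrix_form S) (frame A e u)" by (simp add: N_def S_def shape_gram_def)
  show "trace (G ** N) = tr_S1 S w"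
    unfolding G N trace_gram_inverse[OF w sp X bilinear_matrix_form] tr_S1_eq_trace[OF w] ..
  have sq: "trace (G ** N ** G ** N) = tr_S1_sq S w"
    unfolding G N trace_gram_inverse_square[OF w sp X bilinear_matrix_form] tr_S1_sq_eq_trace[OF w] ..
  have "trace (G ** gram_form (matrix_form (- R u - 3 *\<^sub>R (S ** S))) (frame A e u))
      = (\<Sum>i\<in>UNIV. ((- R u - 3 *\<^sub>R (S ** S)) *v w i) \<bullet> w i)"
    unfolding G trace_gram_inverse[OF w sp X bilinear_matrix_form] trace_gram_form matrix_form_def ..
  also have "\<dots> = - (\<Sum>i\<in>UNIV. (R u *v w i) \<bullet> w i) - 3 * (\<Sum>i\<in>UNIV. (S *v w i) \<bullet> (S *v w i))"
    using symmetric_inner[OF shape_op_symmetric[OF reg]]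
    by (simp add: S_def matrix_vector_mult_diff_rdistrib matrix_vector_mult_uminus_left
        matrix_vector_mult_scaleR_left matrix_vector_mul_assoc[symmetric] inner_diff_left
        sum_subtractf sum_negf sum_distrib_left)
  finally show "2 * trace (G ** N ** G ** N) + trace (G ** gram_form (matrix_form (- R u - 3 *\<^sub>R (S ** S))) (frame A e u))
      = - tr_S1_sq S w - 3 * tr_S2T_S2 S w - (\<Sum>i\<in>UNIV. (R u *v w i) \<bullet> w i)"
    using sq sum_norm_shape_split[OF w shape_op_symmetric[OF reg]] by (simp add: S_def)
qed

text \<open>Since g' = g H near a regular point, g'' = g (H^2 + H').\<close>

lemma g_W_second_derivative:
  fixes e :: "'p::finite \<Rightarrow> real^'n"
  assumes I: "open I" "t \<in> I"
    and reg: "\<And>s. s \<in> I \<Longrightarrow> invertible (A s) \<Longrightarrow> regular_point A A' A'' R s"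
    and inv: "invertible (A t)" and e: "orthonormal_fam e"
    and dH: "(mean_curv A A' e has_real_derivative H') (at t)"
  shows "(deriv (g_W A e) has_real_derivative
      g_W A e t * ((mean_curv A A' e t)\<^sup>2 + H')) (at t)"
proof -
  have reg_t: "regular_point A A' A'' R t" by (rule reg[OF I(2) inv])
  then have "mat_deriv A (A' t) t"
    unfolding regular_point_def by (blast intro: mat_deriv_of_vector_derivative)
  from eventually_nhds_in_open[OF I] eventually_invertible[OF this inv]
  have "eventually (\<lambda>u. deriv (g_W A e) u = g_W A e u * mean_curv A A' e u) (nhds t)"
    by eventually_elim (blast intro: DERIV_imp_deriv g_W_has_derivative reg e)
  moreover have "((\<lambda>u. g_W A e u * mean_curv A A' e u) has_real_derivative
      g_W A e t * H' + g_W A e t * mean_curv A A' e t * mean_curv A A' e t) (at t)"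
    using DERIV_mult'[OF g_W_has_derivative[OF reg_t e] dH] by simp
  ultimately show ?thesis
    by (subst DERIV_cong_ev[OF refl _ refl]) (auto simp: power2_eq_square algebra_simps)
qed


theorem proposition2p1:
  fixes I :: "real set" and t0 t :: real
    and R A A' A'' :: "real \<Rightarrow> real^'n^'n"
    and e :: "'p::finite \<Rightarrow> real^'n"
  assumes I: "open I" "is_interval I" "t0 \<in> I"
    and R_cont: "continuous_on I R"
    and R_sym: "\<forall>s\<in>I. transpose (R s) = R s"
    and dA: "\<forall>s\<in>I. (A has_vector_derivative A' s) (at s)"
    and dA': "\<forall>s\<in>I. (A' has_vector_derivative A'' s) (at s)"
    and jacobi: "\<forall>s\<in>I. A'' s + R s ** A s = 0"
    and ker: "\<forall>v. A t0 *v v = 0 \<and> A' t0 *v v = 0 \<longrightarrow> v = 0"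
    and lagr: "\<forall>s\<in>I. transpose (A' s) ** A s = transpose (A s) ** A' s"
    and e_on: "orthonormal_fam e"
    and t_reg: "t \<in> I" "invertible (A t)"
  shows "\<exists>g2. (deriv (g_W A e) has_real_derivative g2) (at t) \<and>
    (\<forall>w :: 'p \<Rightarrow> real^'n. orthonormal_fam w \<and>
        span (range w) = span (range (\<lambda>i. inv_adj (A t) *v e i)) \<longrightarrow>
      real CARD('p) * (g2 / g_W A e t)
        = (1 / real CARD('p)) * (tr_S1 (A' t ** matrix_inv (A t)) w)\<^sup>2
          - tr_S1_sq (A' t ** matrix_inv (A t)) w
          - 3 * tr_S2T_S2 (A' t ** matrix_inv (A t)) w
          - (\<Sum>i\<in>UNIV. (R t *v w i) \<bullet> w i))"
proof -
  let ?p = "real CARD('p)" and ?H = "mean_curv A A' e t" and ?g = "g_W A e t"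
  have reg: "\<And>s. s \<in> I \<Longrightarrow> invertible (A s) \<Longrightarrow> regular_point A A' A'' R s"
    using dA dA' jacobi lagr unfolding regular_point_def by blast
  have reg_t: "regular_point A A' A'' R t" by (rule reg[OF t_reg])
  obtain H' where dH: "(mean_curv A A' e has_real_derivative H') (at t)"
    and H'_def: "H' = (2 * trace (matrix_inv (gram_M A e t) ** shape_gram A A' e t **
          matrix_inv (gram_M A e t) ** shape_gram A A' e t)
        + trace (matrix_inv (gram_M A e t) ** gram_form (matrix_form (- R t - 3 *\<^sub>R
          (shape_op A A' t ** shape_op A A' t))) (frame A e t))) / ?p"
    using mean_curv_has_derivative[OF reg_t e_on] by blast
  show ?thesis
  proof (intro exI conjI allI impI)
    show "(deriv (g_W A e) has_real_derivative ?g * (?H\<^sup>2 + H')) (at t)"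
      by (rule g_W_second_derivative[OF I(1) t_reg(1) reg t_reg(2) e_on dH])
    fix w :: "'p \<Rightarrow> real^'n"
    assume "orthonormal_fam w \<and> span (range w) = span (range (\<lambda>i. inv_adj (A t) *v e i))"
    then have w: "orthonormal_fam w" and sp: "span (range w) = span (range (frame A e t))"
      by (auto simp: frame_def[abs_def])
    note basis = mean_curv_in_basis[OF reg_t e_on w sp]
    have H: "?H = tr_S1 (shape_op A A' t) w / ?p"
      using basis(1) by (simp add: mean_curv_def)
    have H': "H' = (- tr_S1_sq (shape_op A A' t) w - 3 * tr_S2T_S2 (shape_op A A' t) w
        - (\<Sum>i\<in>UNIV. (R t *v w i) \<bullet> w i)) / ?p"
      using basis(2) by (simp add: H'_def)
    have "?g > 0" by (rule g_W_pos[where A=A and u=t, OF t_reg(2) e_on])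
    then show "?p * (?g * (?H\<^sup>2 + H') / ?g)
        = 1 / ?p * (tr_S1 (A' t ** matrix_inv (A t)) w)\<^sup>2 - tr_S1_sq (A' t ** matrix_inv (A t)) w
          - 3 * tr_S2T_S2 (A' t ** matrix_inv (A t)) w - (\<Sum>i\<in>UNIV. (R t *v w i) \<bullet> w i)"
      unfolding H H' by (simp add: shape_op_def field_simps power2_eq_square)
  qed
qed

end
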